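(* Let $n,r\geq 1$ and let $F$ be a real-valued mapping defined on $\bigcup_{\eta\subset[n]}\Pi(\eta\times[r])$ which has the connectedness factorization property: for every nonempty $\eta\subset[n]$ and every $\rho\in\Pi(\eta\times[r])$, $$F(\rho)=\prod_{b\subset\eta:\ b\times[r]\in\rho\vee\pi_\eta}F(\rho_b),\qquad \rho_b:=\{c\in\rho: c\subset b\times[r]\}.$$ Then for every nonempty $\eta\subset[n]$ the virtual cumulant of $F$ satisfies $$C_F(\eta)=\sum_{\sigma\in\Pi(\eta\times[r]):\ \sigma\vee\pi_\eta=\widehat{1}}F(\sigma),$$ the sum being over connected partitions of $\eta\times[r]$.
   Context: $[n]=\{1,\dots,n\}$; $\Pi(S)$ is the set of partitions of a finite set $S$; $\rho\vee\sigma$ is the finest partition coarser than $\rho$ and $\sigma$, $\widehat{1}$ is the one-block partition. For $\eta\subset[n]$, $\pi_\eta=\{\pi_k:k\in\eta\}$ with $\pi_k=\{(k,1),\dots,(k,r)\}$; note that every block of $\rho\vee\pi_\eta$ has the form $b\times[r]$ with $b\subset\eta$. The Möbius transform is $\widehat{F}(\eta):=\sum_{\rho\in\Pi(\eta\times[r])}F(\rho)$, $\widehat F(\emptyset)=0$. The virtual cumulant $C_F$ is defined by $C_F(\eta)=\widehat F(\eta)$ when $|\eta|=1$, and recursively $C_F(\eta)=\widehat F(\eta)-\sum_{\sigma\in\Pi(\eta),\,|\sigma|\geq 2}\prod_{b\in\sigma}C_F(b)$ for $|\eta|\geq 2$. *)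

theory Defs
  imports Complex_Main "HOL-Library.Disjoint_Sets"
begin

definition same_block :: "'a set set \<Rightarrow> ('a \<times> 'a) set" where
  "same_block P = {(x, y). \<exists>B\<in>P. x \<in> B \<and> y \<in> B}"

text \<open>Join of two partitions of the same ground set: the finest partition coarser than
  both, i.e. the classes of the equivalence closure of the union of their block relations.\<close>
definition pjoin :: "'a set set \<Rightarrow> 'a set set \<Rightarrow> 'a set set" where
  "pjoin \<rho> \<sigma> = (\<Union>\<rho>) // ((same_block \<rho> \<union> same_block \<sigma>)\<^sup>*)"

definition pi_eta :: "nat \<Rightarrow> nat set \<Rightarrow> (nat \<times> nat) set set" where
  "pi_eta r \<eta> = {{k} \<times> {1..r} | k. k \<in> \<eta>}"

definition mobius :: "nat \<Rightarrow> ((nat \<times> nat) set set \<Rightarrow> real) \<Rightarrow> nat set \<Rightarrow> real" where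
  "mobius r F \<eta> = (if \<eta> = {} then 0
     else (\<Sum>\<rho>\<in>{\<rho>. partition_on (\<eta> \<times> {1..r}) \<rho>}. F \<rho>))"

lemma block_card_less:
  assumes "finite \<eta>" "partition_on \<eta> \<sigma>" "card \<sigma> \<ge> 2" "b \<in> \<sigma>"
  shows "card b < card \<eta>"
proof -
  have "\<sigma> - {b} \<noteq> {}"
  proof
    assume "\<sigma> - {b} = {}"
    then have "\<sigma> \<subseteq> {b}" by blast
    then have "card \<sigma> \<le> card {b}" by (intro card_mono) auto
    then have "card \<sigma> \<le> 1" by simp
    with assms show False by simp
  qed
  then obtain c where c: "c \<in> \<sigma>" "c \<noteq> b" by blast
  have "c \<noteq> {}" using assms(2) c(1) by (auto simp: partition_on_def)
  then obtain x where x: "x \<in> c" by blast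
  have "x \<notin> b" using assms(2) c x assms(4) by (auto simp: partition_on_def disjoint_def)
  moreover have "x \<in> \<eta>" "b \<subseteq> \<eta>" using assms(2) c x assms(4) by (auto simp: partition_on_def)
  ultimately have "b \<subset> \<eta>" by blast
  then show ?thesis using assms(1) by (simp add: psubset_card_mono)
qed

text \<open>Virtual cumulant C_F, defined by the recursion in the paper (value on the empty set
  is irrelevant).\<close>
function vcum :: "nat \<Rightarrow> ((nat \<times> nat) set set \<Rightarrow> real) \<Rightarrow> nat set \<Rightarrow> real" where
  "vcum r F \<eta> = (if infinite \<eta> \<or> card \<eta> \<le> 1 then mobius r F \<eta>
     else mobius r F \<eta> - (\<Sum>\<sigma>\<in>{\<sigma>. partition_on \<eta> \<sigma> \<and> card \<sigma> \<ge> 2}. \<Prod>b\<in>\<sigma>. vcum r F b))"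
  by auto
termination
  by (relation "measure (\<lambda>(r, F, \<eta>). card \<eta>)") (auto intro!: block_card_less)

end

(* Every block of rho v pi_eta has the form b x [r], and these b form a partition tau of eta,
   the connected components of rho; the restriction of rho to b x [r] is a connected partition
   of b x [r].  Conversely, gluing arbitrary connected partitions of the sets b x [r] along a
   partition tau of eta gives back a partition whose components are tau.  Both directions rest
   on the locality of the join: on a set saturated by two partitions it only depends on their
   blocks inside that set.  Through this bijection the factorization property turns the Moebius
   transform into  F^(eta) = sum_tau prod_(b in tau) G(b),  where G(b) is the sum of F over the
   connected partitions of b x [r].  This is the recursion defining the virtual cumulant, so
   C_F = G by induction on |eta|. *)

theory Submission
  imports Defs "HOL-Library.FuncSet"
begin

lemma partition_on_eq_if_common:
  "partition_on A P \<Longrightarrow> p \<in> P \<Longrightarrow> q \<in> P \<Longrightarrow> x \<in> p \<Longrightarrow> x \<in> q \<Longrightarrow> p = q"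
  using disjointD[OF partition_onD2] by blast

definition saturated :: "'a set set \<Rightarrow> 'a set \<Rightarrow> bool" where
  "saturated P B \<longleftrightarrow> (\<forall>c\<in>P. c \<inter> B \<noteq> {} \<longrightarrow> c \<subseteq> B)"

lemma saturatedD: "saturated P B \<Longrightarrow> c \<in> P \<Longrightarrow> x \<in> c \<Longrightarrow> x \<in> B \<Longrightarrow> c \<subseteq> B"
  unfolding saturated_def by blast

definition blocks_within :: "'a set set \<Rightarrow> 'a set \<Rightarrow> 'a set set" where
  "blocks_within P B = {c\<in>P. c \<subseteq> B}"

definition join_rel :: "'a set set \<Rightarrow> 'a set set \<Rightarrow> ('a \<times> 'a) set" where
  "join_rel \<rho> \<sigma> = (same_block \<rho> \<union> same_block \<sigma>)\<^sup>*"

lemma pjoin_join_rel: "pjoin \<rho> \<sigma> = (\<Union>\<rho>) // join_rel \<rho> \<sigma>"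
  by (simp add: pjoin_def join_rel_def)

lemma equiv_join_rel: "equiv UNIV (join_rel \<rho> \<sigma>)"
proof -
  have "sym (same_block \<rho> \<union> same_block \<sigma>)"
    by (auto simp: sym_def same_block_def)
  then show ?thesis
    unfolding join_rel_def by (intro equivI refl_rtrancl sym_rtrancl trans_rtrancl) auto
qed

lemma rtrancl_Image_eq_if_closed:
  assumes closed: "\<And>u v. u \<in> B \<Longrightarrow> (u, v) \<in> Q \<Longrightarrow> (u, v) \<in> Q' \<and> v \<in> B"
    and "Q' \<subseteq> Q" and "x \<in> B"
  shows "Q\<^sup>* `` {x} = Q'\<^sup>* `` {x}" and "Q\<^sup>* `` {x} \<subseteq> B"
proof -
  have "(x, y) \<in> Q'\<^sup>* \<and> y \<in> B" if "(x, y) \<in> Q\<^sup>*" for y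
    using that
  proof (induction rule: rtrancl_induct)
    case base
    then show ?case using \<open>x \<in> B\<close> by simp
  next
    case (step u v)
    then show ?case using closed[of u v] by (meson rtrancl_into_rtrancl)
  qed
  moreover have "Q'\<^sup>* \<subseteq> Q\<^sup>*" using \<open>Q' \<subseteq> Q\<close> by (rule rtrancl_mono)
  ultimately show "Q\<^sup>* `` {x} = Q'\<^sup>* `` {x}" and "Q\<^sup>* `` {x} \<subseteq> B" by blast+
qed

lemma pjoin_class_eq:
  assumes "C \<in> pjoin \<rho> \<sigma>" "x \<in> C"
  shows "C = join_rel \<rho> \<sigma> `` {x}"
proof -
  obtain a where "C = join_rel \<rho> \<sigma> `` {a}"
    using assms(1) unfolding pjoin_join_rel by (auto elim!: quotientE)
  with assms(2) show ?thesis
    using equiv_class_eq[OF equiv_join_rel] by simp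
qed

lemma partition_on_pjoin:
  assumes "\<Union>\<sigma> \<subseteq> \<Union>\<rho>"
  shows "partition_on (\<Union>\<rho>) (pjoin \<rho> \<sigma>)"
proof (rule partition_onI)
  have "(same_block \<rho> \<union> same_block \<sigma>) `` \<Union>\<rho> \<subseteq> \<Union>\<rho>"
    using assms by (auto simp: same_block_def)
  then have "join_rel \<rho> \<sigma> `` \<Union>\<rho> = \<Union>\<rho>"
    unfolding join_rel_def by (rule Image_closed_trancl)
  then show "\<Union>(pjoin \<rho> \<sigma>) = \<Union>\<rho>"
    unfolding pjoin_join_rel quotient_def by blast
  show "disjnt C D" if "C \<in> pjoin \<rho> \<sigma>" "D \<in> pjoin \<rho> \<sigma>" "C \<noteq> D" for C D
    using that pjoin_class_eq[OF that(1)] pjoin_class_eq[OF that(2)] by (auto simp: disjnt_def)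
  show "{} \<notin> pjoin \<rho> \<sigma>"
    using equiv_join_rel[of \<rho> \<sigma>] unfolding pjoin_join_rel
    by (auto elim!: quotientE dest: equiv_class_self)
qed

lemma saturated_pjoin_class:
  assumes "C \<in> pjoin \<rho> \<sigma>"
  shows "saturated \<rho> C" and "saturated \<sigma> C"
proof -
  have "c \<subseteq> C" if "c \<in> \<rho> \<or> c \<in> \<sigma>" "x \<in> c" "x \<in> C" for c x
  proof
    fix y assume "y \<in> c"
    then have "(x, y) \<in> join_rel \<rho> \<sigma>"
      using that unfolding join_rel_def same_block_def by blast
    then show "y \<in> C" using pjoin_class_eq[OF assms \<open>x \<in> C\<close>] by blast
  qed
  then show "saturated \<rho> C" and "saturated \<sigma> C"
    unfolding saturated_def by blast+
qed

lemma same_block_blocks_within: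
  assumes "saturated P B" "u \<in> B" "(u, v) \<in> same_block P"
  shows "(u, v) \<in> same_block (blocks_within P B) \<and> v \<in> B"
proof -
  from assms(3) obtain c where c: "c \<in> P" "u \<in> c" "v \<in> c"
    by (auto simp: same_block_def)
  with assms(1,2) have "c \<subseteq> B"
    by (auto simp: saturated_def)
  with c show ?thesis
    by (auto simp: same_block_def blocks_within_def)
qed

lemma join_rel_Image_within:
  assumes "saturated \<rho> B" "saturated \<sigma> B" "x \<in> B"
  shows "join_rel \<rho> \<sigma> `` {x} = join_rel (blocks_within \<rho> B) (blocks_within \<sigma> B) `` {x}"
    and "join_rel \<rho> \<sigma> `` {x} \<subseteq> B"
proof -
  let ?Q = "same_block \<rho> \<union> same_block \<sigma>"
  let ?Q' = "same_block (blocks_within \<rho> B) \<union> same_block (blocks_within \<sigma> B)"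
  have closed: "(u, v) \<in> ?Q' \<and> v \<in> B" if "u \<in> B" "(u, v) \<in> ?Q" for u v
    using that same_block_blocks_within[OF assms(1)] same_block_blocks_within[OF assms(2)] by blast
  have "?Q' \<subseteq> ?Q"
    unfolding same_block_def blocks_within_def by blast
  from rtrancl_Image_eq_if_closed[OF closed this assms(3)]
  show "join_rel \<rho> \<sigma> `` {x} = join_rel (blocks_within \<rho> B) (blocks_within \<sigma> B) `` {x}"
    and "join_rel \<rho> \<sigma> `` {x} \<subseteq> B"
    unfolding join_rel_def by simp_all
qed

lemma saturated_pjoin:
  assumes "saturated \<rho> B" "saturated \<sigma> B"
  shows "saturated (pjoin \<rho> \<sigma>) B"
  unfolding saturated_def
proof (intro ballI impI)
  fix C assume C: "C \<in> pjoin \<rho> \<sigma>" "C \<inter> B \<noteq> {}"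
  then obtain x where "x \<in> C" "x \<in> B" by blast
  then show "C \<subseteq> B"
    using pjoin_class_eq[OF C(1) \<open>x \<in> C\<close>] join_rel_Image_within(2)[OF assms] by simp
qed

lemma pjoin_blocks_within:
  assumes "saturated \<rho> B" "saturated \<sigma> B"
  shows "pjoin (blocks_within \<rho> B) (blocks_within \<sigma> B) = blocks_within (pjoin \<rho> \<sigma>) B"
proof -
  let ?cls = "\<lambda>x. join_rel \<rho> \<sigma> `` {x}"
  have U: "\<Union>(blocks_within \<rho> B) = \<Union>\<rho> \<inter> B"
    using assms(1) unfolding saturated_def blocks_within_def by blast
  have "pjoin (blocks_within \<rho> B) (blocks_within \<sigma> B) = ?cls ` (\<Union>\<rho> \<inter> B)"
    unfolding pjoin_join_rel quotient_def U UNION_singleton_eq_range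
    using join_rel_Image_within(1)[OF assms] by (intro image_cong) auto
  also have "\<dots> = blocks_within (?cls ` \<Union>\<rho>) B"
  proof -
    have "?cls x \<subseteq> B \<longleftrightarrow> x \<in> B" for x
      using join_rel_Image_within(2)[OF assms, of x] equiv_class_self[OF equiv_join_rel, of x]
      by blast
    then show ?thesis
      unfolding blocks_within_def by auto
  qed
  finally show ?thesis
    unfolding pjoin_join_rel quotient_def UNION_singleton_eq_range .
qed

lemma partition_on_blocks_within:
  assumes P: "partition_on A P" and "saturated P B" "B \<subseteq> A"
  shows "partition_on B (blocks_within P B)"
proof (rule partition_onI)
  show "\<Union>(blocks_within P B) = B"
  proof
    show "B \<subseteq> \<Union>(blocks_within P B)"
    proof
      fix x assume "x \<in> B"
      then obtain c where "c \<in> P" "x \<in> c"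
        using \<open>B \<subseteq> A\<close> partition_onD1[OF P] by blast
      with \<open>x \<in> B\<close> \<open>saturated P B\<close> show "x \<in> \<Union>(blocks_within P B)"
        unfolding saturated_def blocks_within_def by blast
    qed
  qed (auto simp: blocks_within_def)
  show "disjnt p q" if "p \<in> blocks_within P B" "q \<in> blocks_within P B" "p \<noteq> q" for p q
    using that partition_onD2[OF P] by (auto simp: blocks_within_def dest: pairwiseD)
  show "{} \<notin> blocks_within P B"
    using partition_onD3[OF P] by (simp add: blocks_within_def)
qed

lemma Union_blocks_within:
  assumes "{} \<notin> P" "\<Union>P \<subseteq> \<Union>Q" "\<And>C. C \<in> Q \<Longrightarrow> saturated P C"
  shows "(\<Union>C\<in>Q. blocks_within P C) = P"
proof
  show "P \<subseteq> (\<Union>C\<in>Q. blocks_within P C)"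
  proof
    fix c assume "c \<in> P"
    with assms(1) have "c \<noteq> {}" by blast
    then obtain x where "x \<in> c" by blast
    with \<open>c \<in> P\<close> assms(2) obtain C where "C \<in> Q" "x \<in> C" by blast
    with \<open>c \<in> P\<close> \<open>x \<in> c\<close> assms(3)[of C] show "c \<in> (\<Union>C\<in>Q. blocks_within P C)"
      unfolding saturated_def blocks_within_def by blast
  qed
qed (auto simp: blocks_within_def)

lemma partition_on_UN:
  assumes P: "\<And>i. i \<in> I \<Longrightarrow> partition_on (B i) (P i)" and disj: "disjoint_family_on B I"
  shows "partition_on (\<Union>i\<in>I. B i) (\<Union>i\<in>I. P i)"
proof (rule partition_onI)
  show "\<Union>(\<Union>i\<in>I. P i) = (\<Union>i\<in>I. B i)"
    using partition_onD1[OF P] by blast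
  show "{} \<notin> (\<Union>i\<in>I. P i)"
    using partition_onD3[OF P] by blast
  fix p q assume "p \<in> (\<Union>i\<in>I. P i)" "q \<in> (\<Union>i\<in>I. P i)" "p \<noteq> q"
  then obtain i j where ij: "i \<in> I" "p \<in> P i" "j \<in> I" "q \<in> P j" by blast
  show "disjnt p q"
  proof (cases "i = j")
    case True
    then show ?thesis
      using ij \<open>p \<noteq> q\<close> partition_onD2[OF P[OF ij(1)]] by (auto dest: pairwiseD)
  next
    case False
    then have "B i \<inter> B j = {}"
      using disjoint_family_onD[OF disj ij(1,3)] by blast
    moreover have "p \<subseteq> B i" "q \<subseteq> B j"
      using ij partition_onD1[OF P] by blast+
    ultimately show ?thesis by (auto simp: disjnt_def)
  qed
qed

lemma blocks_within_block:
  assumes "partition_on A P" "B \<in> P"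
  shows "blocks_within P B = {B}"
proof -
  have "c = B" if "c \<in> P" "c \<subseteq> B" for c
  proof -
    from that assms have "c \<noteq> {}" by (auto dest: partition_onD3)
    with that have "\<not> disjnt c B" by (auto simp: disjnt_def)
    with that assms show "c = B" by (auto dest: partition_onD2 pairwiseD)
  qed
  with assms(2) show ?thesis by (auto simp: blocks_within_def)
qed

lemma partition_on_Times_imageD:
  assumes P: "partition_on (A \<times> R) ((\<lambda>b. b \<times> R) ` \<tau>)" and "y \<in> R"
  shows "partition_on A \<tau>"
proof (rule partition_onI)
  have "(\<Union>\<tau>) \<times> R = \<Union>((\<lambda>b. b \<times> R) ` \<tau>)"
    by blast
  also have "\<dots> = A \<times> R"
    using partition_onD1[OF P] by simp
  finally show "\<Union>\<tau> = A"
    by (rule Times_eq_cancel2[OF \<open>y \<in> R\<close>, THEN iffD1])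
  show "disjnt p q" if "p \<in> \<tau>" "q \<in> \<tau>" "p \<noteq> q" for p q
  proof -
    have "p \<times> R \<noteq> q \<times> R"
      using that(3) Times_eq_cancel2[OF \<open>y \<in> R\<close>] by metis
    moreover have "p \<times> R \<in> (\<lambda>b. b \<times> R) ` \<tau>" "q \<times> R \<in> (\<lambda>b. b \<times> R) ` \<tau>"
      using that(1,2) by auto
    ultimately have "disjnt (p \<times> R) (q \<times> R)"
      using pairwiseD[OF partition_onD2[OF P]] by blast
    with \<open>y \<in> R\<close> show ?thesis
      by (auto simp: disjnt_def)
  qed
  show "{} \<notin> \<tau>"
    using partition_onD3[OF P] by (metis Sigma_empty1 image_eqI)
qed

lemma Union_pi_eta: "\<Union>(pi_eta r \<eta>) = \<eta> \<times> {1..r}"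
  by (auto simp: pi_eta_def)

lemma saturated_pi_eta: "saturated (pi_eta r \<eta>) (b \<times> {1..r})"
  by (auto simp: saturated_def pi_eta_def)

lemma blocks_within_pi_eta:
  assumes "r \<ge> 1" "b \<subseteq> \<eta>"
  shows "blocks_within (pi_eta r \<eta>) (b \<times> {1..r}) = pi_eta r b"
proof -
  have "{k} \<times> {1..r} \<subseteq> b \<times> {1..r} \<longleftrightarrow> k \<in> b" for k
    using Times_subset_cancel2[of 1 "{1..r}" "{k}" b] assms(1) by simp
  with assms(2) show ?thesis
    by (auto simp: blocks_within_def pi_eta_def)
qed

lemma partition_on_pjoin_pi_eta:
  assumes "partition_on (\<eta> \<times> {1..r}) \<rho>"
  shows "partition_on (\<eta> \<times> {1..r}) (pjoin \<rho> (pi_eta r \<eta>))"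
  using partition_on_pjoin[of "pi_eta r \<eta>" \<rho>] partition_onD1[OF assms]
  by (simp add: Union_pi_eta)

lemma pjoin_pi_eta_block:
  assumes "partition_on (\<eta> \<times> {1..r}) \<rho>" "C \<in> pjoin \<rho> (pi_eta r \<eta>)"
  shows "C = fst ` C \<times> {1..r}" and "fst ` C \<subseteq> \<eta>"
proof -
  have C_sub: "C \<subseteq> \<eta> \<times> {1..r}"
    using partition_onD1[OF partition_on_pjoin_pi_eta[OF assms(1)]] assms(2) by blast
  then show "fst ` C \<subseteq> \<eta>" by auto
  have fibre: "{k} \<times> {1..r} \<subseteq> C" if "(k, i) \<in> C" for k i
  proof -
    have "{k} \<times> {1..r} \<in> pi_eta r \<eta>"
      using that C_sub by (auto simp: pi_eta_def)
    moreover have "{k} \<times> {1..r} \<inter> C \<noteq> {}"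
      using that C_sub by auto
    ultimately show ?thesis
      using saturated_pjoin_class(2)[OF assms(2)] by (simp add: saturated_def)
  qed
  show "C = fst ` C \<times> {1..r}"
  proof
    show "C \<subseteq> fst ` C \<times> {1..r}"
      using C_sub by (force simp: image_iff)
    show "fst ` C \<times> {1..r} \<subseteq> C"
    proof
      fix y assume "y \<in> fst ` C \<times> {1..r}"
      then obtain x where "x \<in> C" "fst y = fst x" "snd y \<in> {1..r}" by auto
      then show "y \<in> C"
        using fibre[of "fst x" "snd x"] by (cases y) auto
    qed
  qed
qed

definition components :: "nat \<Rightarrow> nat set \<Rightarrow> (nat \<times> nat) set set \<Rightarrow> nat set set" where
  "components r \<eta> \<rho> = {b. b \<subseteq> \<eta> \<and> b \<times> {1..r} \<in> pjoin \<rho> (pi_eta r \<eta>)}"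

definition connected_partitions :: "nat \<Rightarrow> nat set \<Rightarrow> (nat \<times> nat) set set set" where
  "connected_partitions r b =
     {\<sigma>. partition_on (b \<times> {1..r}) \<sigma> \<and> pjoin \<sigma> (pi_eta r b) = {b \<times> {1..r}}}"

lemma finite_connected_partitions: "finite b \<Longrightarrow> finite (connected_partitions r b)"
  by (rule finite_subset[OF _ finitely_many_partition_on[of "b \<times> {1..r}"]])
    (auto simp: connected_partitions_def)

context
  fixes r :: nat and \<eta> :: "nat set" and \<rho> :: "(nat \<times> nat) set set"
  assumes r: "r \<ge> 1" and \<rho>: "partition_on (\<eta> \<times> {1..r}) \<rho>"
begin

lemma pjoin_pi_eta_eq_image:
  "pjoin \<rho> (pi_eta r \<eta>) = (\<lambda>b. b \<times> {1..r}) ` components r \<eta> \<rho>"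
proof
  show "pjoin \<rho> (pi_eta r \<eta>) \<subseteq> (\<lambda>b. b \<times> {1..r}) ` components r \<eta> \<rho>"
  proof
    fix C assume C: "C \<in> pjoin \<rho> (pi_eta r \<eta>)"
    with pjoin_pi_eta_block[OF \<rho> C] have "fst ` C \<in> components r \<eta> \<rho>"
      by (simp add: components_def)
    with pjoin_pi_eta_block(1)[OF \<rho> C] show "C \<in> (\<lambda>b. b \<times> {1..r}) ` components r \<eta> \<rho>"
      by blast
  qed
qed (auto simp: components_def)

lemma partition_on_components: "partition_on \<eta> (components r \<eta> \<rho>)"
proof (rule partition_on_Times_imageD)
  show "partition_on (\<eta> \<times> {1..r}) ((\<lambda>b. b \<times> {1..r}) ` components r \<eta> \<rho>)"
    using partition_on_pjoin_pi_eta[OF \<rho>] by (simp add: pjoin_pi_eta_eq_image)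
  show "1 \<in> {1..r}" using r by simp
qed

lemma blocks_within_component_connected:
  assumes b: "b \<in> components r \<eta> \<rho>"
  shows "blocks_within \<rho> (b \<times> {1..r}) \<in> connected_partitions r b"
proof -
  let ?B = "b \<times> {1..r}"
  have B: "?B \<in> pjoin \<rho> (pi_eta r \<eta>)" and "b \<subseteq> \<eta>"
    using b by (auto simp: components_def)
  note sat = saturated_pjoin_class[OF B]
  have "pjoin (blocks_within \<rho> ?B) (pi_eta r b) = {?B}"
    using pjoin_blocks_within[OF sat] blocks_within_pi_eta[OF r \<open>b \<subseteq> \<eta>\<close>]
      blocks_within_block[OF partition_on_pjoin_pi_eta[OF \<rho>] B] by simp
  moreover have "partition_on ?B (blocks_within \<rho> ?B)"
    using partition_on_blocks_within[OF \<rho> sat(1)] \<open>b \<subseteq> \<eta>\<close> by blast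
  ultimately show ?thesis
    by (simp add: connected_partitions_def)
qed

lemma Union_blocks_within_components:
  "(\<Union>b\<in>components r \<eta> \<rho>. blocks_within \<rho> (b \<times> {1..r})) = \<rho>"
proof -
  have "(\<Union>C\<in>pjoin \<rho> (pi_eta r \<eta>). blocks_within \<rho> C) = \<rho>"
  proof (rule Union_blocks_within)
    show "{} \<notin> \<rho>" using partition_onD3[OF \<rho>] .
    show "\<Union>\<rho> \<subseteq> \<Union>(pjoin \<rho> (pi_eta r \<eta>))"
      using partition_onD1[OF partition_on_pjoin_pi_eta[OF \<rho>]] partition_onD1[OF \<rho>]
      by simp
  qed (rule saturated_pjoin_class)
  then show ?thesis
    by (simp add: pjoin_pi_eta_eq_image)
qed

end

context
  fixes r :: nat and \<eta> :: "nat set" and \<tau> :: "nat set set"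
    and f :: "nat set \<Rightarrow> (nat \<times> nat) set set"
  assumes r: "r \<ge> 1" and \<tau>: "partition_on \<eta> \<tau>" and f: "f \<in> PiE \<tau> (connected_partitions r)"
begin

lemma partition_on_glued_block:
  "b \<in> \<tau> \<Longrightarrow> partition_on (b \<times> {1..r}) (f b)"
  using f by (auto simp: connected_partitions_def)

lemma glued_block_index:
  assumes "b \<in> \<tau>" "b' \<in> \<tau>" "c \<in> f b'" "x \<in> c" "x \<in> b \<times> {1..r}"
  shows "b' = b"
proof -
  have "x \<in> b' \<times> {1..r}"
    using partition_onD1[OF partition_on_glued_block[OF assms(2)]] assms(3,4) by blast
  with assms(5) show ?thesis
    using partition_on_eq_if_common[OF \<tau> assms(2,1), of "fst x"] by auto
qed

lemma partition_on_glue: "partition_on (\<eta> \<times> {1..r}) (\<Union>(f ` \<tau>))"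
proof -
  have "m \<inter> n = {}" if "m \<in> \<tau>" "n \<in> \<tau>" "m \<noteq> n" for m n
    using partition_onD2[OF \<tau>] that by (auto simp: disjoint_def)
  then have "disjoint_family_on (\<lambda>b. b \<times> {1..r}) \<tau>"
    by (simp add: disjoint_family_on_def Times_Int_Times)
  then have "partition_on (\<Union>b\<in>\<tau>. b \<times> {1..r}) (\<Union>(f ` \<tau>))"
    using partition_on_UN[of \<tau> "\<lambda>b. b \<times> {1..r}" f] partition_on_glued_block by blast
  moreover have "(\<Union>b\<in>\<tau>. b \<times> {1..r}) = \<eta> \<times> {1..r}"
    using partition_onD1[OF \<tau>] by blast
  ultimately show ?thesis by simp
qed

lemma saturated_glue: "b \<in> \<tau> \<Longrightarrow> saturated (\<Union>(f ` \<tau>)) (b \<times> {1..r})"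
  unfolding saturated_def
proof (intro ballI impI)
  fix c assume b: "b \<in> \<tau>" and "c \<in> \<Union>(f ` \<tau>)" "c \<inter> b \<times> {1..r} \<noteq> {}"
  then obtain b' x where b': "b' \<in> \<tau>" "c \<in> f b'" and "x \<in> c" "x \<in> b \<times> {1..r}"
    by blast
  then have "b' = b"
    using glued_block_index[OF b] by blast
  with b' show "c \<subseteq> b \<times> {1..r}"
    using partition_onD1[OF partition_on_glued_block[OF b'(1)]] by blast
qed

lemma blocks_within_glue:
  assumes b: "b \<in> \<tau>"
  shows "blocks_within (\<Union>(f ` \<tau>)) (b \<times> {1..r}) = f b"
proof -
  have "c \<in> f b" if c: "b' \<in> \<tau>" "c \<in> f b'" "c \<subseteq> b \<times> {1..r}" for b' c
  proof -
    have "c \<noteq> {}"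
      using c(2) partition_onD3[OF partition_on_glued_block[OF c(1)]] by blast
    then obtain x where "x \<in> c" by blast
    with c have "b' = b"
      using glued_block_index[OF b] by blast
    with c(2) show ?thesis by simp
  qed
  with b show ?thesis
    using partition_onD1[OF partition_on_glued_block[OF b]]
    by (auto simp: blocks_within_def)
qed

lemma pjoin_glue_block:
  assumes "b \<in> \<tau>"
  shows "blocks_within (pjoin (\<Union>(f ` \<tau>)) (pi_eta r \<eta>)) (b \<times> {1..r}) = {b \<times> {1..r}}"
proof -
  have "b \<subseteq> \<eta>" using assms partition_onD1[OF \<tau>] by blast
  have "blocks_within (pjoin (\<Union>(f ` \<tau>)) (pi_eta r \<eta>)) (b \<times> {1..r})
      = pjoin (blocks_within (\<Union>(f ` \<tau>)) (b \<times> {1..r})) (blocks_within (pi_eta r \<eta>) (b \<times> {1..r}))"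
    using pjoin_blocks_within[OF saturated_glue[OF assms] saturated_pi_eta] by simp
  also have "\<dots> = pjoin (f b) (pi_eta r b)"
    unfolding blocks_within_glue[OF assms] blocks_within_pi_eta[OF r \<open>b \<subseteq> \<eta>\<close>] ..
  also have "\<dots> = {b \<times> {1..r}}"
    using PiE_mem[OF f assms] by (simp add: connected_partitions_def)
  finally show ?thesis .
qed

lemma components_glue: "components r \<eta> (\<Union>(f ` \<tau>)) = \<tau>"
proof
  show "\<tau> \<subseteq> components r \<eta> (\<Union>(f ` \<tau>))"
  proof
    fix b assume b: "b \<in> \<tau>"
    then have "b \<times> {1..r} \<in> blocks_within (pjoin (\<Union>(f ` \<tau>)) (pi_eta r \<eta>)) (b \<times> {1..r})"
      using pjoin_glue_block by simp
    moreover have "b \<subseteq> \<eta>"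
      using b partition_onD1[OF \<tau>] by blast
    ultimately show "b \<in> components r \<eta> (\<Union>(f ` \<tau>))"
      by (simp add: components_def blocks_within_def)
  qed
  show "components r \<eta> (\<Union>(f ` \<tau>)) \<subseteq> \<tau>"
  proof
    fix b' assume b': "b' \<in> components r \<eta> (\<Union>(f ` \<tau>))"
    then have "b' \<noteq> {}"
      using partition_onD3[OF partition_on_components[OF r partition_on_glue]] by blast
    then obtain k where "k \<in> b'" by blast
    moreover have "b' \<subseteq> \<eta>" using b' by (simp add: components_def)
    ultimately obtain b where b: "b \<in> \<tau>" "k \<in> b"
      using partition_onD1[OF \<tau>] by blast
    let ?C = "b' \<times> {1..r}"
    have C: "?C \<in> pjoin (\<Union>(f ` \<tau>)) (pi_eta r \<eta>)"
      using b' by (simp add: components_def)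
    have "(k, 1) \<in> ?C" "(k, 1) \<in> b \<times> {1..r}"
      using \<open>k \<in> b'\<close> b(2) r by simp_all
    with C have "?C \<subseteq> b \<times> {1..r}"
      by (intro saturatedD[OF saturated_pjoin[OF saturated_glue[OF b(1)] saturated_pi_eta]])
    with C have "?C \<in> blocks_within (pjoin (\<Union>(f ` \<tau>)) (pi_eta r \<eta>)) (b \<times> {1..r})"
      by (simp add: blocks_within_def)
    then have "?C = b \<times> {1..r}"
      using pjoin_glue_block[OF b(1)] by simp
    then have "b' = b"
      using Times_eq_cancel2[of 1 "{1..r}" b' b] r by simp
    with b show "b' \<in> \<tau>" by simp
  qed
qed

lemma split_glue:
  "(components r \<eta> (\<Union>(f ` \<tau>)),
    \<lambda>b\<in>components r \<eta> (\<Union>(f ` \<tau>)). blocks_within (\<Union>(f ` \<tau>)) (b \<times> {1..r})) = (\<tau>, f)"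
  using components_glue blocks_within_glue PiE_arb[OF f] by (auto simp: fun_eq_iff)

end

lemma bij_betw_glue:
  assumes "r \<ge> 1"
  shows "bij_betw (\<lambda>(\<tau>, f). \<Union>(f ` \<tau>))
    (SIGMA \<tau>:{\<tau>. partition_on \<eta> \<tau>}. PiE \<tau> (connected_partitions r))
    {\<rho>. partition_on (\<eta> \<times> {1..r}) \<rho>}"
proof (rule bij_betw_byWitness[where f' = "\<lambda>\<rho>. (components r \<eta> \<rho>,
    \<lambda>b\<in>components r \<eta> \<rho>. blocks_within \<rho> (b \<times> {1..r}))"], goal_cases)
  case 1
  show ?case
    using split_glue[OF assms] by (simp add: split_paired_Ball_Sigma del: prod.inject)
next
  case 2
  show ?case
    using Union_blocks_within_components[OF assms] by simp
next
  case 3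
  show ?case
    using partition_on_glue[OF assms] by auto
next
  case 4
  show ?case
    using partition_on_components[OF assms] blocks_within_component_connected[OF assms] by auto
qed

lemma mobius_eq_sum_partitions_prod_connected:
  fixes F :: "(nat \<times> nat) set set \<Rightarrow> real"
  assumes r: "r \<ge> 1" and fin: "finite \<eta>" and "\<eta> \<noteq> {}"
    and factorization: "\<And>\<rho>. partition_on (\<eta> \<times> {1..r}) \<rho> \<Longrightarrow>
      F \<rho> = (\<Prod>b\<in>components r \<eta> \<rho>. F (blocks_within \<rho> (b \<times> {1..r})))"
  shows "mobius r F \<eta> =
    (\<Sum>\<tau>\<in>{\<tau>. partition_on \<eta> \<tau>}. \<Prod>b\<in>\<tau>. \<Sum>\<sigma>\<in>connected_partitions r b. F \<sigma>)"
proof -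
  have fin_blocks: "finite \<tau>" "\<forall>b\<in>\<tau>. finite (connected_partitions r b)" if "partition_on \<eta> \<tau>" for \<tau>
    using finite_elements[OF fin that] finite_connected_partitions
      finite_subset[OF _ fin] partition_onD1[OF that] by auto
  have "mobius r F \<eta> = (\<Sum>\<rho>\<in>{\<rho>. partition_on (\<eta> \<times> {1..r}) \<rho>}. F \<rho>)"
    using \<open>\<eta> \<noteq> {}\<close> by (simp add: mobius_def)
  also have "\<dots> = (\<Sum>p\<in>(SIGMA \<tau>:{\<tau>. partition_on \<eta> \<tau>}. PiE \<tau> (connected_partitions r)).
      F (case p of (\<tau>, f) \<Rightarrow> \<Union>(f ` \<tau>)))"
    by (rule sum.reindex_bij_betw[OF bij_betw_glue[OF r], symmetric])
  also have "\<dots> = (\<Sum>(\<tau>, f)\<in>(SIGMA \<tau>:{\<tau>. partition_on \<eta> \<tau>}. PiE \<tau> (connected_partitions r)).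
      \<Prod>b\<in>\<tau>. F (f b))"
  proof (rule sum.cong[OF refl], clarify)
    fix \<tau> f assume \<tau>: "partition_on \<eta> \<tau>" and f: "f \<in> PiE \<tau> (connected_partitions r)"
    have "F (\<Union>(f ` \<tau>)) =
        (\<Prod>b\<in>components r \<eta> (\<Union>(f ` \<tau>)). F (blocks_within (\<Union>(f ` \<tau>)) (b \<times> {1..r})))"
      by (rule factorization[OF partition_on_glue[OF r \<tau> f]])
    also have "\<dots> = (\<Prod>b\<in>\<tau>. F (f b))"
      unfolding components_glue[OF r \<tau> f]
      by (rule prod.cong[OF refl], rule arg_cong[where f = F], rule blocks_within_glue[OF r \<tau> f])
    finally show "F (\<Union>(f ` \<tau>)) = (\<Prod>b\<in>\<tau>. F (f b))" .
  qed
  also have "\<dots> = (\<Sum>\<tau>\<in>{\<tau>. partition_on \<eta> \<tau>}. \<Sum>f\<in>PiE \<tau> (connected_partitions r). \<Prod>b\<in>\<tau>. F (f b))"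
    using finitely_many_partition_on[OF fin] fin_blocks
    by (intro sum.Sigma[symmetric]) (auto intro: finite_PiE)
  also have "\<dots> = (\<Sum>\<tau>\<in>{\<tau>. partition_on \<eta> \<tau>}. \<Prod>b\<in>\<tau>. \<Sum>\<sigma>\<in>connected_partitions r b. F \<sigma>)"
    using fin_blocks by (intro sum.cong[OF refl] prod_sum_PiE[symmetric]) auto
  finally show ?thesis .
qed

lemma partitions_eq_insert_trivial:
  assumes "finite \<eta>" "\<eta> \<noteq> {}"
  shows "{\<tau>. partition_on \<eta> \<tau>} = insert {\<eta>} {\<tau>. partition_on \<eta> \<tau> \<and> 2 \<le> card \<tau>}"
proof -
  have "\<tau> = {\<eta>}" if \<tau>: "partition_on \<eta> \<tau>" "\<not> 2 \<le> card \<tau>" for \<tau>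
  proof -
    have "\<tau> \<noteq> {}"
      using partition_onD1[OF \<tau>(1)] assms(2) by auto
    then have "card \<tau> \<noteq> 0"
      using finite_elements[OF assms(1) \<tau>(1)] by simp
    with \<tau>(2) have "card \<tau> = 1" by linarith
    then obtain b where "\<tau> = {b}" by (rule card_1_singletonE)
    with partition_onD1[OF \<tau>(1)] show ?thesis by simp
  qed
  then show ?thesis
    using partition_on_space[OF assms(2)] by blast
qed

lemma vcum_unfold:
  assumes "finite \<eta>"
  shows "vcum r F \<eta> = mobius r F \<eta> -
    (\<Sum>\<sigma>\<in>{\<sigma>. partition_on \<eta> \<sigma> \<and> 2 \<le> card \<sigma>}. \<Prod>b\<in>\<sigma>. vcum r F b)"
proof (cases "card \<eta> \<le> 1")
  case True
  have "\<not> (partition_on \<eta> \<sigma> \<and> 2 \<le> card \<sigma>)" for \<sigma>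
  proof
    assume \<sigma>: "partition_on \<eta> \<sigma> \<and> 2 \<le> card \<sigma>"
    then obtain b where "b \<in> \<sigma>" by fastforce
    then have "card b < card \<eta>" "b \<noteq> {}" "b \<subseteq> \<eta>"
      using \<sigma> block_card_less[OF assms] partition_onD1 partition_onD3 by blast+
    moreover from this have "finite b" using assms finite_subset by blast
    ultimately show False
      using True card_0_eq by fastforce
  qed
  then have no_split: "{\<sigma>. partition_on \<eta> \<sigma> \<and> 2 \<le> card \<sigma>} = {}"
    by blast
  from True show ?thesis
    unfolding no_split by (subst vcum.simps) (simp del: vcum.simps)
next
  case False
  with assms show ?thesis
    by (subst vcum.simps) (simp del: vcum.simps)
qed

lemma vcum_eq_if_mobius_expansion:
  fixes G :: "nat set \<Rightarrow> real"
  assumes "finite \<eta>" "\<eta> \<noteq> {}"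
    and expansion: "\<And>\<eta>'. \<eta>' \<subseteq> \<eta> \<Longrightarrow> \<eta>' \<noteq> {} \<Longrightarrow>
      mobius r F \<eta>' = (\<Sum>\<tau>\<in>{\<tau>. partition_on \<eta>' \<tau>}. \<Prod>b\<in>\<tau>. G b)"
  shows "vcum r F \<eta> = G \<eta>"
  using assms
proof (induction "card \<eta>" arbitrary: \<eta> rule: less_induct)
  case less
  let ?P2 = "{\<tau>. partition_on \<eta> \<tau> \<and> 2 \<le> card \<tau>}"
  have "vcum r F b = G b" if "\<tau> \<in> ?P2" "b \<in> \<tau>" for \<tau> b
  proof (rule less.hyps)
    have \<tau>: "partition_on \<eta> \<tau>" "2 \<le> card \<tau>" using that(1) by simp_all
    show "card b < card \<eta>" by (rule block_card_less[OF less.prems(1) \<tau> that(2)])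
    have "b \<subseteq> \<eta>" using partition_onD1[OF \<tau>(1)] that(2) by blast
    then show "finite b" using less.prems(1) finite_subset by blast
    show "b \<noteq> {}" using partition_onD3[OF \<tau>(1)] that(2) by blast
    show "mobius r F \<eta>' = (\<Sum>\<tau>\<in>{\<tau>. partition_on \<eta>' \<tau>}. \<Prod>b\<in>\<tau>. G b)"
      if "\<eta>' \<subseteq> b" "\<eta>' \<noteq> {}" for \<eta>'
      using less.prems(3) that \<open>b \<subseteq> \<eta>\<close> by blast
  qed
  then have "(\<Sum>\<tau>\<in>?P2. \<Prod>b\<in>\<tau>. vcum r F b) = (\<Sum>\<tau>\<in>?P2. \<Prod>b\<in>\<tau>. G b)"
    by (intro sum.cong prod.cong) auto
  moreover have "mobius r F \<eta> = G \<eta> + (\<Sum>\<tau>\<in>?P2. \<Prod>b\<in>\<tau>. G b)"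
  proof -
    have "finite ?P2"
      using finitely_many_partition_on[OF less.prems(1)] by (rule rev_finite_subset) auto
    then show ?thesis
      using less.prems(3)[OF order_refl less.prems(2)]
      by (simp add: partitions_eq_insert_trivial[OF less.prems(1,2)])
  qed
  ultimately show ?case
    by (simp add: vcum_unfold[OF less.prems(1)] del: vcum.simps)
qed

theorem proposition3p3:
  fixes n r :: nat and F :: "(nat \<times> nat) set set \<Rightarrow> real"
  assumes "n \<ge> 1" and "r \<ge> 1"
    and factorization: "\<forall>\<eta> \<rho>. \<eta> \<subseteq> {1..n} \<and> \<eta> \<noteq> {} \<and> partition_on (\<eta> \<times> {1..r}) \<rho> \<longrightarrow>
      F \<rho> = (\<Prod>b\<in>{b. b \<subseteq> \<eta> \<and> b \<times> {1..r} \<in> pjoin \<rho> (pi_eta r \<eta>)}.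
                 F {c\<in>\<rho>. c \<subseteq> b \<times> {1..r}})"
  shows "\<forall>\<eta>. \<eta> \<subseteq> {1..n} \<and> \<eta> \<noteq> {} \<longrightarrow>
    vcum r F \<eta> = (\<Sum>\<sigma>\<in>{\<sigma>. partition_on (\<eta> \<times> {1..r}) \<sigma> \<and> pjoin \<sigma> (pi_eta r \<eta>) = {\<eta> \<times> {1..r}}}. F \<sigma>)"
proof (intro allI impI, elim conjE)
  fix \<eta> assume "\<eta> \<subseteq> {1..n}" "\<eta> \<noteq> {}"
  then have "finite \<eta>" using finite_subset by blast
  have "vcum r F \<eta> = (\<Sum>\<sigma>\<in>connected_partitions r \<eta>. F \<sigma>)"
  proof (rule vcum_eq_if_mobius_expansion[OF \<open>finite \<eta>\<close> \<open>\<eta> \<noteq> {}\<close>])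
    fix \<eta>' assume \<eta>': "\<eta>' \<subseteq> \<eta>" "\<eta>' \<noteq> {}"
    show "mobius r F \<eta>' =
        (\<Sum>\<tau>\<in>{\<tau>. partition_on \<eta>' \<tau>}. \<Prod>b\<in>\<tau>. \<Sum>\<sigma>\<in>connected_partitions r b. F \<sigma>)"
    proof (rule mobius_eq_sum_partitions_prod_connected[OF \<open>r \<ge> 1\<close> _ \<open>\<eta>' \<noteq> {}\<close>])
      show "finite \<eta>'" using \<eta>'(1) \<open>finite \<eta>\<close> by (rule finite_subset)
      fix \<rho> assume "partition_on (\<eta>' \<times> {1..r}) \<rho>"
      with \<eta>' \<open>\<eta> \<subseteq> {1..n}\<close>
      show "F \<rho> = (\<Prod>b\<in>components r \<eta>' \<rho>. F (blocks_within \<rho> (b \<times> {1..r})))"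
        using factorization[rule_format, of \<eta>' \<rho>]
        unfolding components_def blocks_within_def by blast
    qed
  qed
  then show "vcum r F \<eta> = (\<Sum>\<sigma>\<in>{\<sigma>. partition_on (\<eta> \<times> {1..r}) \<sigma> \<and>
      pjoin \<sigma> (pi_eta r \<eta>) = {\<eta> \<times> {1..r}}}. F \<sigma>)"
    by (simp add: connected_partitions_def)
qed

end
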